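(* Let the real variables be $c_{11},c_{22},c_{33},c_{12},c_{23},c_{31},s_{12},s_{23},s_{31}$ (collectively $(c,s)$). Define $p_3=c_{12}(c_{23}c_{31}-s_{23}s_{31})-s_{12}(s_{23}c_{31}+c_{23}s_{31})-c_{11}c_{22}c_{33}$, $p_{ij}=c_{ij}^2+s_{ij}^2-c_{ii}c_{jj}$ for $(i,j)\in\{(1,2),(2,3),(3,1)\}$, $q_3^1=s_{12}c_{33}+c_{23}s_{31}+s_{23}c_{31}$, $q_3^2=c_{12}c_{33}-c_{23}c_{31}+s_{23}s_{31}$. Then $\{(c,s):p_3=p_{12}=p_{23}=p_{31}=0\}=\{(c,s):q_3^1=q_3^2=p_{12}=p_{23}=p_{31}=0\}$. *)

theory Defs
  imports Main "HOL.Real"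
begin

definition p3 :: "real \<Rightarrow> real \<Rightarrow> real \<Rightarrow> real \<Rightarrow> real \<Rightarrow> real \<Rightarrow> real \<Rightarrow> real \<Rightarrow> real \<Rightarrow> real" where
  "p3 c11 c22 c33 c12 c23 c31 s12 s23 s31 =
     c12 * (c23 * c31 - s23 * s31) - s12 * (s23 * c31 + c23 * s31) - c11 * c22 * c33"

definition pij :: "real \<Rightarrow> real \<Rightarrow> real \<Rightarrow> real \<Rightarrow> real" where
  "pij cij sij cii cjj = cij^2 + sij^2 - cii * cjj"

definition q31 :: "real \<Rightarrow> real \<Rightarrow> real \<Rightarrow> real \<Rightarrow> real \<Rightarrow> real \<Rightarrow> real \<Rightarrow> real \<Rightarrow> real \<Rightarrow> real" where
  "q31 c11 c22 c33 c12 c23 c31 s12 s23 s31 = s12 * c33 + c23 * s31 + s23 * c31"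

definition q32 :: "real \<Rightarrow> real \<Rightarrow> real \<Rightarrow> real \<Rightarrow> real \<Rightarrow> real \<Rightarrow> real \<Rightarrow> real \<Rightarrow> real \<Rightarrow> real" where
  "q32 c11 c22 c33 c12 c23 c31 s12 s23 s31 = c12 * c33 - c23 * c31 + s23 * s31"

end

theory Submission
  imports Defs
begin

text \<open>With \<open>z = c12 + i s12\<close> and \<open>w = (c23 + i s23)(c31 + i s31)\<close> we have
  \<open>p3 = Re (z w) - c11 c22 c33\<close>, while \<open>q31 = q32 = 0\<close> says \<open>c33 z = conj w\<close>. On the
  set \<open>p12 = p23 = p31 = 0\<close> one has \<open>|z|\<^sup>2 = c11 c22\<close> and \<open>|w|\<^sup>2 = c33\<^sup>2 |z|\<^sup>2\<close>, so
  \<open>|c33 z - conj w|\<^sup>2 = 2 c33 (c33 |z|\<^sup>2 - Re (z w)) = -2 c33 p3\<close>; hence \<open>p3 = 0\<close> forces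
  \<open>c33 z = conj w\<close>, and conversely \<open>c33 z = conj w\<close> gives \<open>z w = c33 |z|\<^sup>2\<close>.\<close>

lemma re_mult_eq_scaled_norm_iff:
  fixes a b x y t :: "'a::linordered_idom"
  assumes norms: "x^2 + y^2 = t^2 * (a^2 + b^2)"
  shows "a * x - b * y = t * (a^2 + b^2) \<longleftrightarrow> t * a = x \<and> t * b = - y"
proof
  assume re: "a * x - b * y = t * (a^2 + b^2)"
  have "(t * a - x)^2 + (t * b + y)^2 = t^2 * (a^2 + b^2) - 2 * t * (a * x - b * y) + (x^2 + y^2)"
    by algebra
  also have "\<dots> = 0"
    using re norms by algebra
  finally show "t * a = x \<and> t * b = - y"
    unfolding sum_power2_eq_zero_iff by simp
next
  assume "t * a = x \<and> t * b = - y"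
  then show "a * x - b * y = t * (a^2 + b^2)"
    by (auto simp: power2_eq_square algebra_simps)
qed

lemma two_squares_product_identity:
  fixes c s c' s' :: "'a::comm_ring_1"
  shows "(c * c' - s * s')^2 + (s * c' + c * s')^2 = (c^2 + s^2) * (c'^2 + s'^2)"
  by (simp add: power2_eq_square algebra_simps)

lemma p3_eq_zero_iff_q3:
  assumes "pij c12 s12 c11 c22 = 0" "pij c23 s23 c22 c33 = 0" "pij c31 s31 c33 c11 = 0"
  shows "p3 c11 c22 c33 c12 c23 c31 s12 s23 s31 = 0 \<longleftrightarrow>
      q31 c11 c22 c33 c12 c23 c31 s12 s23 s31 = 0 \<and> q32 c11 c22 c33 c12 c23 c31 s12 s23 s31 = 0"
proof -
  define x where "x = c23 * c31 - s23 * s31"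
  define y where "y = s23 * c31 + c23 * s31"
  have z12: "c12^2 + s12^2 = c11 * c22"
    using assms(1) by (simp add: pij_def)
  have "x^2 + y^2 = (c23^2 + s23^2) * (c31^2 + s31^2)"
    unfolding x_def y_def by (rule two_squares_product_identity)
  also have "\<dots> = c33^2 * (c12^2 + s12^2)"
    using assms(2,3) z12 by (simp add: pij_def power2_eq_square)
  finally have "c12 * x - s12 * y = c33 * (c12^2 + s12^2) \<longleftrightarrow> c33 * c12 = x \<and> c33 * s12 = - y"
    by (rule re_mult_eq_scaled_norm_iff)
  then show ?thesis
    unfolding p3_def q31_def q32_def x_def y_def z12 by (auto simp: algebra_simps)
qed

theorem proposition5:
  "{(c11, c22, c33, c12, c23, c31, s12, s23, s31).
      p3 (c11::real) c22 c33 c12 c23 c31 s12 s23 s31 = 0 \<and> pij c12 s12 c11 c22 = 0 \<and>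
      pij c23 s23 c22 c33 = 0 \<and> pij c31 s31 c33 c11 = 0}
 = {(c11, c22, c33, c12, c23, c31, s12, s23, s31).
      q31 c11 c22 c33 c12 c23 c31 s12 s23 s31 = 0 \<and> q32 c11 c22 c33 c12 c23 c31 s12 s23 s31 = 0 \<and>
      pij c12 s12 c11 c22 = 0 \<and> pij c23 s23 c22 c33 = 0 \<and> pij c31 s31 c33 c11 = 0}"
  using p3_eq_zero_iff_q3 by fast

end
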